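(* Let $\mathcal{N}$ be a one-counter net. A strategy $\sigma$ of Eve in the letter game on $\mathcal{N}$ is winning for Eve if and only if every transition that $\sigma$ takes (in plays consistent with $\sigma$) is residual.
   Context: A one-counter net (OCN) is $\mathcal{N}=(Q,\Sigma,\Delta,q_0,F)$ with $Q$ finite, $\Sigma$ finite, $q_0\in Q$, $F\subseteq Q$, $\Delta\subseteq Q\times\Sigma\times\{-1,0,1\}\times Q$; configurations $(q,n)\in Q\times\mathbb{N}$, step $(q,n)\xrightarrow{a,d}(p,n+d)$ if $(q,a,d,p)\in\Delta$ and $n+d\ge0$; runs start at $(q_0,0)$ and are accepting if the last state is in $F$; $\mathcal{L}(\mathcal{N})$ is the set of words with an accepting run, and $\mathcal{L}(q,k)$ denotes the set of words accepted when runs start at $(q,k)$ instead. A step $(q,k)\xrightarrow{a,d}(q',k')$ is residual if $\mathcal{L}(q',k')=a^{-1}\mathcal{L}(q,k)=\{w: aw\in\mathcal{L}(q,k)\}$. Letter game: positions $(c,w)$, start $((q_0,0),\varepsilon)$; each round Adam picks $a\in\Sigma$, Eve picks a step $c\xrightarrow{a,d}c'$; if Eve has none and $wa$ is a prefix of a word of $\mathcal{L}(\mathcal{N})$ she loses; if $wa\in\mathcal{L}(\mathcal{N})$ but the state of $c'$ is not in $F$, Adam wins; otherwise continue from $(c',wa)$; Eve wins infinite plays. *)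

theory Defs
  imports Main
begin

record ('q, 'a) ocn =
  states :: "'q set"
  alph   :: "'a set"
  trans  :: "('q \<times> 'a \<times> int \<times> 'q) set"
  init   :: 'q
  final  :: "'q set"

definition wf_ocn :: "('q, 'a) ocn \<Rightarrow> bool" where
  "wf_ocn N \<longleftrightarrow> finite (states N) \<and> finite (alph N) \<and>
     trans N \<subseteq> states N \<times> alph N \<times> {-1, 0, 1} \<times> states N \<and>
     init N \<in> states N \<and> final N \<subseteq> states N"

definition step :: "('q, 'a) ocn \<Rightarrow> 'q \<times> nat \<Rightarrow> 'a \<Rightarrow> int \<Rightarrow> 'q \<times> nat \<Rightarrow> bool" where
  "step N c a d c' \<longleftrightarrow> (fst c, a, d, fst c') \<in> trans N \<and>
      int (snd c) + d \<ge> 0 \<and> int (snd c') = int (snd c) + d"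

fun acc :: "('q, 'a) ocn \<Rightarrow> 'q \<times> nat \<Rightarrow> 'a list \<Rightarrow> bool" where
  "acc N c [] \<longleftrightarrow> fst c \<in> final N"
| "acc N c (a # w) \<longleftrightarrow> (\<exists>d c'. step N c a d c' \<and> acc N c' w)"

definition lang_from :: "('q, 'a) ocn \<Rightarrow> 'q \<times> nat \<Rightarrow> 'a list set" where
  "lang_from N c = {w. acc N c w}"

definition lang :: "('q, 'a) ocn \<Rightarrow> 'a list set" where
  "lang N = lang_from N (init N, 0)"

definition residual :: "('q, 'a) ocn \<Rightarrow> 'q \<times> nat \<Rightarrow> 'a \<Rightarrow> 'q \<times> nat \<Rightarrow> bool" where
  "residual N c a c' \<longleftrightarrow> lang_from N c' = {w. a # w \<in> lang_from N c}"

text \<open>A strategy of Eve maps the word played so far by Adam (including the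
  letter just chosen) to a transition of the net.  The play induced by a strategy
  on Adam's word: play N \<sigma> w = Some c if Eve's choices along w are legal steps and
  lead to configuration c; None if at some point the chosen transition cannot be
  taken (Eve is stuck).\<close>
type_synonym ('q, 'a) strategy = "'a list \<Rightarrow> 'q \<times> 'a \<times> int \<times> 'q"

fun prun :: "('q, 'a) ocn \<Rightarrow> ('q, 'a) strategy \<Rightarrow> 'a list \<Rightarrow> 'q \<times> nat \<Rightarrow> 'a list
             \<Rightarrow> ('q \<times> nat) option" where
  "prun N \<sigma> u c [] = Some c"
| "prun N \<sigma> u c (a # w) =
     (case \<sigma> (u @ [a]) of (q, b, d, p) \<Rightarrow>
        if q = fst c \<and> b = a \<and> step N c a d (p, nat (int (snd c) + d))
        then prun N \<sigma> (u @ [a]) (p, nat (int (snd c) + d)) w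
        else None)"

definition play :: "('q, 'a) ocn \<Rightarrow> ('q, 'a) strategy \<Rightarrow> 'a list \<Rightarrow> ('q \<times> nat) option" where
  "play N \<sigma> w = prun N \<sigma> [] (init N, 0) w"

text \<open>Eve must pick a step whenever one exists: a (legal) strategy never gets
  stuck when a step on the chosen letter is available.\<close>
definition eve_strategy :: "('q, 'a) ocn \<Rightarrow> ('q, 'a) strategy \<Rightarrow> bool" where
  "eve_strategy N \<sigma> \<longleftrightarrow>
     (\<forall>w \<in> lists (alph N). \<forall>a \<in> alph N. \<forall>c.
        play N \<sigma> w = Some c \<and> (\<exists>d c'. step N c a d c') \<longrightarrow> play N \<sigma> (w @ [a]) \<noteq> None)"

text \<open>Winning for Eve: in no play consistent with \<sigma> does Eve lose, i.e. she is never
  without a step on a prefix of a word of L(N), and whenever the word read so far is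
  in L(N) the reached state is accepting.  (If Eve has no step and the word is not a
  prefix of a word of L(N), the play ends without Eve losing.)\<close>
definition winning :: "('q, 'a) ocn \<Rightarrow> ('q, 'a) strategy \<Rightarrow> bool" where
  "winning N \<sigma> \<longleftrightarrow>
     (\<forall>w \<in> lists (alph N). \<forall>a \<in> alph N. \<forall>c. play N \<sigma> w = Some c \<longrightarrow>
        ((\<not> (\<exists>d c'. step N c a d c') \<longrightarrow> \<not> (\<exists>v. w @ [a] @ v \<in> lang N)) \<and>
         (\<forall>c'. play N \<sigma> (w @ [a]) = Some c' \<and> w @ [a] \<in> lang N \<longrightarrow> fst c' \<in> final N)))"

definition takes_only_residual :: "('q, 'a) ocn \<Rightarrow> ('q, 'a) strategy \<Rightarrow> bool" where
  "takes_only_residual N \<sigma> \<longleftrightarrow>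
     (\<forall>w \<in> lists (alph N). \<forall>a \<in> alph N. \<forall>c c'.
        play N \<sigma> w = Some c \<and> play N \<sigma> (w @ [a]) = Some c' \<longrightarrow> residual N c a c')"

end

theory Submission
  imports Defs
begin

text \<open>Both conditions are equivalent to the invariant that the configuration
  reached by \<sigma> after Adam's word w accepts exactly the quotient of L(N) by w.
  Residual steps preserve this invariant along the play, and under the invariant
  the conditions for Eve to win are read off L(N) directly.  Conversely, a
  winning strategy can follow every continuation v of w in L(N): by induction
  on v, Eve is never stuck on a prefix of L(N) and ends in an accepting state,
  so the reached configuration accepts v.\<close>

lemma prun_append:
  "prun N \<sigma> u c (w @ v) =
     (case prun N \<sigma> u c w of None \<Rightarrow> None | Some c0 \<Rightarrow> prun N \<sigma> (u @ w) c0 v)"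
  by (induction w arbitrary: u c) (auto split: prod.splits option.splits)

lemma prun_acc:
  "prun N \<sigma> u c w = Some c' \<Longrightarrow> acc N c' v \<Longrightarrow> acc N c (w @ v)"
proof (induction w arbitrary: u c)
  case Nil
  then show ?case by simp
next
  case (Cons a w)
  obtain q b d p where "\<sigma> (u @ [a]) = (q, b, d, p)"
    by (cases "\<sigma> (u @ [a])") auto
  with Cons.prems have "step N c a d (p, nat (int (snd c) + d))"
    and "prun N \<sigma> (u @ [a]) (p, nat (int (snd c) + d)) w = Some c'"
    by (auto split: if_splits)
  with Cons.IH Cons.prems(2) show ?case by (metis acc.simps(2) append_Cons)
qed

lemma play_acc_in_lang: "play N \<sigma> w = Some c \<Longrightarrow> acc N c v \<Longrightarrow> w @ v \<in> lang N"
  unfolding play_def lang_def lang_from_def using prun_acc by fastforce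

lemma play_snocD:
  assumes "play N \<sigma> (w @ [a]) = Some c'"
  obtains c d where "play N \<sigma> w = Some c" and "step N c a d c'"
proof -
  from assms obtain c where c: "play N \<sigma> w = Some c" and "prun N \<sigma> w c [a] = Some c'"
    unfolding play_def by (auto simp: prun_append split: option.splits)
  then obtain d where "step N c a d c'"
    by (auto split: prod.splits if_splits)
  with c show thesis by (rule that)
qed

lemma acc_subset_alph: "wf_ocn N \<Longrightarrow> acc N c w \<Longrightarrow> set w \<subseteq> alph N"
  by (induction w arbitrary: c) (auto simp: wf_ocn_def step_def)

definition tracks_residuals :: "('q, 'a) ocn \<Rightarrow> ('q, 'a) strategy \<Rightarrow> bool" where
  "tracks_residuals N \<sigma> \<longleftrightarrow>
     (\<forall>w \<in> lists (alph N). \<forall>c. play N \<sigma> w = Some c \<longrightarrow> lang_from N c = {v. w @ v \<in> lang N})"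

lemma tracks_residualsD:
  "tracks_residuals N \<sigma> \<Longrightarrow> w \<in> lists (alph N) \<Longrightarrow> play N \<sigma> w = Some c \<Longrightarrow>
    lang_from N c = {v. w @ v \<in> lang N}"
  unfolding tracks_residuals_def by blast

lemma winning_play_acc:
  assumes "wf_ocn N" and "eve_strategy N \<sigma>" and "winning N \<sigma>"
  shows "w \<in> lists (alph N) \<Longrightarrow> play N \<sigma> w = Some c \<Longrightarrow> w @ v \<in> lang N \<Longrightarrow> acc N c v"
proof (induction v arbitrary: w c)
  case Nil
  show ?case
  proof (cases w rule: rev_cases)
    case Nil
    with Nil.prems show ?thesis by (simp add: play_def lang_def lang_from_def)
  next
    case (snoc w' a)
    with Nil.prems obtain c0 where "play N \<sigma> w' = Some c0"
      by (auto elim: play_snocD)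
    moreover have "w' \<in> lists (alph N)" "a \<in> alph N"
      using Nil.prems snoc by auto
    ultimately have "\<forall>c'. play N \<sigma> (w' @ [a]) = Some c' \<and> w' @ [a] \<in> lang N \<longrightarrow> fst c' \<in> final N"
      using \<open>winning N \<sigma>\<close> unfolding winning_def by blast
    with Nil.prems snoc show ?thesis by simp
  qed
next
  case (Cons a v)
  have "a \<in> alph N"
    using acc_subset_alph[OF \<open>wf_ocn N\<close>, of "(init N, 0)" "w @ a # v"] Cons.prems(3)
    by (simp add: lang_def lang_from_def)
  have "\<exists>d c'. step N c a d c'"
    using \<open>winning N \<sigma>\<close> Cons.prems \<open>a \<in> alph N\<close> unfolding winning_def by fastforce
  with \<open>eve_strategy N \<sigma>\<close> Cons.prems \<open>a \<in> alph N\<close> obtain c' where c': "play N \<sigma> (w @ [a]) = Some c'"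
    unfolding eve_strategy_def by blast
  with Cons.prems obtain d where "step N c a d c'"
    by (auto elim: play_snocD)
  moreover have "acc N c' v"
    using Cons.IH[of "w @ [a]" c'] Cons.prems \<open>a \<in> alph N\<close> c' by auto
  ultimately show ?case by (meson acc.simps(2))
qed

lemma winning_imp_tracks_residuals:
  assumes "wf_ocn N" and "eve_strategy N \<sigma>" and "winning N \<sigma>"
  shows "tracks_residuals N \<sigma>"
  unfolding tracks_residuals_def lang_from_def
  using winning_play_acc[OF assms] play_acc_in_lang by blast

lemma tracks_residuals_imp_takes_only_residual:
  assumes "tracks_residuals N \<sigma>"
  shows "takes_only_residual N \<sigma>"
  unfolding takes_only_residual_def
proof (intro ballI allI impI)
  fix w a c c'
  assume w: "w \<in> lists (alph N)" and a: "a \<in> alph N"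
    and plays: "play N \<sigma> w = Some c \<and> play N \<sigma> (w @ [a]) = Some c'"
  have "lang_from N c = {v. w @ v \<in> lang N}"
    using tracks_residualsD[OF assms w] plays by blast
  moreover have "lang_from N c' = {v. (w @ [a]) @ v \<in> lang N}"
    using tracks_residualsD[OF assms, of "w @ [a]"] w a plays by simp
  ultimately show "residual N c a c'"
    unfolding residual_def by simp
qed

lemma takes_only_residual_imp_tracks_residuals:
  assumes "takes_only_residual N \<sigma>"
  shows "tracks_residuals N \<sigma>"
  unfolding tracks_residuals_def
proof (intro ballI allI impI)
  fix w c
  show "w \<in> lists (alph N) \<Longrightarrow> play N \<sigma> w = Some c \<Longrightarrow> lang_from N c = {v. w @ v \<in> lang N}"
  proof (induction w arbitrary: c rule: rev_induct)
    case Nil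
    then show ?case by (simp add: play_def lang_def)
  next
    case (snoc a w)
    then obtain c0 where c0: "play N \<sigma> w = Some c0"
      by (auto elim: play_snocD)
    moreover have "w \<in> lists (alph N)" "a \<in> alph N"
      using snoc.prems by auto
    ultimately have "residual N c0 a c"
      using assms snoc.prems unfolding takes_only_residual_def by blast
    with snoc.IH[OF _ c0] snoc.prems show ?case
      unfolding residual_def by auto
  qed
qed

lemma tracks_residuals_imp_winning:
  assumes "tracks_residuals N \<sigma>"
  shows "winning N \<sigma>"
  unfolding winning_def
proof (intro ballI allI impI conjI)
  fix w a c
  assume w: "w \<in> lists (alph N)" and a: "a \<in> alph N" and c: "play N \<sigma> w = Some c"
  have quotient: "lang_from N c = {v. w @ v \<in> lang N}"
    using assms w c by (rule tracks_residualsD)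
  show "\<not> (\<exists>v. w @ [a] @ v \<in> lang N)" if "\<not> (\<exists>d c'. step N c a d c')"
  proof
    assume "\<exists>v. w @ [a] @ v \<in> lang N"
    then obtain v where "a # v \<in> lang_from N c"
      using quotient by auto
    with that show False
      by (auto simp: lang_from_def)
  qed
  fix c'
  assume "play N \<sigma> (w @ [a]) = Some c' \<and> w @ [a] \<in> lang N"
  with tracks_residualsD[OF assms, of "w @ [a]" c'] w a have "[] \<in> lang_from N c'"
    by simp
  then show "fst c' \<in> final N"
    by (simp add: lang_from_def)
qed

theorem proposition1:
  fixes N :: "('q, 'a) ocn" and \<sigma> :: "('q, 'a) strategy"
  assumes "wf_ocn N" and "eve_strategy N \<sigma>"
  shows "winning N \<sigma> \<longleftrightarrow> takes_only_residual N \<sigma>"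
  using winning_imp_tracks_residuals[OF assms] tracks_residuals_imp_takes_only_residual
    takes_only_residual_imp_tracks_residuals tracks_residuals_imp_winning
  by blast

end
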